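(* Let $\Gamma$ be a finite generalised hexagon of order $(s,t)$ and let $\Gamma'$ be a subhexagon of $\Gamma$ of order $(k,t)$. If $k^2t=s$, then every line of $\Gamma$ intersects a line of $\Gamma'$. In particular, every line of a split Cayley hexagon $\mathsf{H}(q)$ meets a line of any subhexagon of order $(1,q)$, and every line of $\mathsf{T}(q^3,q)$ meets a line of any split Cayley subhexagon $\mathsf{H}(q)$ (of order $(q,q)$) of $\mathsf{T}(q^3,q)$.
   Context: A generalised hexagon of order $(s,t)$ has $s+1$ points per line and $t+1$ lines per point and has $(1+s)(1+st+s^2t^2)$ points and $(1+t)(1+st+s^2t^2)$ lines. A subhexagon is a subgeometry that is itself a (weak) generalised hexagon. *)

theory Defs
  imports Main
begin

definition inc_vertices :: "'p set \<Rightarrow> 'l set \<Rightarrow> ('p + 'l) set" where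
  "inc_vertices P L = Inl ` P \<union> Inr ` L"

fun inc_adj :: "'p set \<Rightarrow> 'l set \<Rightarrow> ('p \<Rightarrow> 'l \<Rightarrow> bool) \<Rightarrow> ('p + 'l) \<Rightarrow> ('p + 'l) \<Rightarrow> bool" where
  "inc_adj P L I (Inl p) (Inr l) = (p \<in> P \<and> l \<in> L \<and> I p l)"
| "inc_adj P L I (Inr l) (Inl p) = (p \<in> P \<and> l \<in> L \<and> I p l)"
| "inc_adj P L I _ _ = False"

text \<open>A walk is a nonempty vertex list with consecutive vertices adjacent;
its length is the number of edges, i.e. length xs - 1.\<close>
definition inc_walk :: "'p set \<Rightarrow> 'l set \<Rightarrow> ('p \<Rightarrow> 'l \<Rightarrow> bool) \<Rightarrow> ('p + 'l) list \<Rightarrow> bool" where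
  "inc_walk P L I xs \<longleftrightarrow> xs \<noteq> [] \<and> set xs \<subseteq> inc_vertices P L \<and>
     (\<forall>i. Suc i < length xs \<longrightarrow> inc_adj P L I (xs ! i) (xs ! Suc i))"

definition inc_dist_le :: "'p set \<Rightarrow> 'l set \<Rightarrow> ('p \<Rightarrow> 'l \<Rightarrow> bool) \<Rightarrow> ('p + 'l) \<Rightarrow> ('p + 'l) \<Rightarrow> nat \<Rightarrow> bool" where
  "inc_dist_le P L I x y d \<longleftrightarrow>
     (\<exists>xs. inc_walk P L I xs \<and> hd xs = x \<and> last xs = y \<and> length xs \<le> Suc d)"

definition inc_cycle :: "'p set \<Rightarrow> 'l set \<Rightarrow> ('p \<Rightarrow> 'l \<Rightarrow> bool) \<Rightarrow> ('p + 'l) list \<Rightarrow> bool" where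
  "inc_cycle P L I vs \<longleftrightarrow> length vs \<ge> 3 \<and> distinct vs \<and> inc_walk P L I vs \<and>
     inc_adj P L I (last vs) (hd vs)"

text \<open>Generalised n-gon (possibly weak): incidence graph of diameter n and girth 2n.\<close>
definition gen_polygon :: "nat \<Rightarrow> 'p set \<Rightarrow> 'l set \<Rightarrow> ('p \<Rightarrow> 'l \<Rightarrow> bool) \<Rightarrow> bool" where
  "gen_polygon n P L I \<longleftrightarrow>
     (\<forall>x \<in> inc_vertices P L. \<forall>y \<in> inc_vertices P L. inc_dist_le P L I x y n) \<and>
     (\<exists>x \<in> inc_vertices P L. \<exists>y \<in> inc_vertices P L. \<not> inc_dist_le P L I x y (n - 1)) \<and>
     (\<forall>vs. inc_cycle P L I vs \<longrightarrow> length vs \<ge> 2 * n) \<and>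
     (\<exists>vs. inc_cycle P L I vs \<and> length vs = 2 * n)"

definition gen_hexagon_of_order :: "'p set \<Rightarrow> 'l set \<Rightarrow> ('p \<Rightarrow> 'l \<Rightarrow> bool) \<Rightarrow> nat \<Rightarrow> nat \<Rightarrow> bool" where
  "gen_hexagon_of_order P L I s t \<longleftrightarrow>
     finite P \<and> finite L \<and> s \<ge> 1 \<and> t \<ge> 1 \<and> gen_polygon 6 P L I \<and>
     (\<forall>l \<in> L. card {p \<in> P. I p l} = s + 1) \<and>
     (\<forall>p \<in> P. card {l \<in> L. I p l} = t + 1)"

definition subhexagon_of_order :: "'p set \<Rightarrow> 'l set \<Rightarrow> 'p set \<Rightarrow> 'l set \<Rightarrow> ('p \<Rightarrow> 'l \<Rightarrow> bool) \<Rightarrow> nat \<Rightarrow> nat \<Rightarrow> bool" where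
  "subhexagon_of_order P' L' P L I k t \<longleftrightarrow>
     P' \<subseteq> P \<and> L' \<subseteq> L \<and> gen_hexagon_of_order P' L' I k t"

end

theory Submission
  imports Defs
begin

text \<open>
  Counting the vertices of the incidence graph by their distance from a fixed line shows that a
  generalised hexagon of order (s, t) has (1 + t)(1 + s t + s^2 t^2) lines.

  Call a line external if it is not a line of the subhexagon \<Gamma>' but meets a line l' of \<Gamma>' in a
  point outside \<Gamma>'. A point outside \<Gamma>' lies on at most one line of \<Gamma>', and an external line meets
  at most one line of \<Gamma>': otherwise a path of length at most 6 in \<Gamma>' would close up to a cycle of
  length less than 12. Together with the fact that two points lie on at most one line, this shows
  that each line of \<Gamma>' carries s - k points outside \<Gamma>', each on t external lines, and that these
  are all distinct, so there are |L'| (s - k) t external lines. If s = k^2 t then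
  (1 + k t + k^2 t^2)(1 + (s - k) t) = 1 + s t + s^2 t^2, so the lines of \<Gamma>' and the external
  lines together exhaust all lines of \<Gamma>.
\<close>

section \<open>Walks in the incidence graph\<close>

lemma inc_adj_sym: "inc_adj P L I u v = inc_adj P L I v u"
  by (cases u; cases v) simp_all

lemma inc_adj_in_vertices:
  "inc_adj P L I u v \<Longrightarrow> u \<in> inc_vertices P L \<and> v \<in> inc_vertices P L"
  by (cases u; cases v) (auto simp: inc_vertices_def)

lemma inc_adj_isl: "inc_adj P L I u v \<Longrightarrow> isl u \<noteq> isl v"
  by (cases u; cases v) simp_all

lemma inc_adj_mono:
  "P' \<subseteq> P \<Longrightarrow> L' \<subseteq> L \<Longrightarrow> inc_adj P' L' I u v \<Longrightarrow> inc_adj P L I u v"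
  by (cases u; cases v) auto

lemma inc_walk_mono:
  "P' \<subseteq> P \<Longrightarrow> L' \<subseteq> L \<Longrightarrow> inc_walk P' L' I xs \<Longrightarrow> inc_walk P L I xs"
  unfolding inc_walk_def inc_vertices_def using inc_adj_mono by blast

lemma inc_walk_singleton: "x \<in> inc_vertices P L \<Longrightarrow> inc_walk P L I [x]"
  by (simp add: inc_walk_def)

lemma inc_walk_take: "inc_walk P L I xs \<Longrightarrow> 0 < n \<Longrightarrow> inc_walk P L I (take n xs)"
  unfolding inc_walk_def by (auto dest: in_set_takeD)

lemma inc_walk_drop: "inc_walk P L I xs \<Longrightarrow> n < length xs \<Longrightarrow> inc_walk P L I (drop n xs)"
  unfolding inc_walk_def by (auto dest: in_set_dropD)

lemma inc_walk_append:
  assumes xs: "inc_walk P L I xs" and ys: "inc_walk P L I ys"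
    and adj: "inc_adj P L I (last xs) (hd ys)"
  shows "inc_walk P L I (xs @ ys)"
  unfolding inc_walk_def
proof (intro conjI allI impI)
  have ne: "xs \<noteq> []" "ys \<noteq> []" using xs ys by (simp_all add: inc_walk_def)
  show "xs @ ys \<noteq> []" using ne by simp
  show "set (xs @ ys) \<subseteq> inc_vertices P L" using xs ys by (simp add: inc_walk_def)
  fix i assume i: "Suc i < length (xs @ ys)"
  consider "Suc i < length xs" | "Suc i = length xs" | "length xs \<le> i" by linarith
  then show "inc_adj P L I ((xs @ ys) ! i) ((xs @ ys) ! Suc i)"
  proof cases
    case 1 then show ?thesis using xs by (simp add: inc_walk_def nth_append)
  next
    case 2
    then have "i = length xs - 1" by simp
    then show ?thesis using 2 adj ne by (simp add: nth_append last_conv_nth hd_conv_nth)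
  next
    case 3
    then have "Suc (i - length xs) < length ys" "Suc i - length xs = Suc (i - length xs)"
      using i by auto
    then show ?thesis using 3 ys by (simp add: inc_walk_def nth_append)
  qed
qed

lemma inc_walk_Cons:
  "inc_walk P L I xs \<Longrightarrow> inc_adj P L I x (hd xs) \<Longrightarrow> inc_walk P L I (x # xs)"
  using inc_walk_append[of P L I "[x]" xs] inc_walk_singleton inc_adj_in_vertices by fastforce

lemma inc_walk_concat:
  assumes xs: "inc_walk P L I xs" and ys: "inc_walk P L I ys" and eq: "last xs = hd ys"
  shows "inc_walk P L I (xs @ tl ys)"
proof (cases "tl ys = []")
  case True then show ?thesis using xs by simp
next
  case False
  then obtain y ys' where ys': "ys = y # ys'" "ys' \<noteq> []" by (cases ys) auto
  have "inc_walk P L I ys'" using inc_walk_drop[OF ys, of 1] ys' by simp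
  moreover have "inc_adj P L I y (hd ys')"
    using ys ys' unfolding inc_walk_def by (auto simp: hd_conv_nth)
  ultimately show ?thesis using inc_walk_append[OF xs] eq ys' by simp
qed

lemma inc_walk_rev: "inc_walk P L I xs \<Longrightarrow> inc_walk P L I (rev xs)"
  unfolding inc_walk_def
proof (intro conjI allI impI; (elim conjE)?)
  fix i assume walk: "\<forall>i. Suc i < length xs \<longrightarrow> inc_adj P L I (xs ! i) (xs ! Suc i)"
    and i: "Suc i < length (rev xs)"
  let ?j = "length xs - Suc (Suc i)"
  have "inc_adj P L I (xs ! ?j) (xs ! Suc ?j)" using walk i by simp
  moreover have "rev xs ! i = xs ! Suc ?j" "rev xs ! Suc i = xs ! ?j"
    using i by (simp_all add: rev_nth Suc_diff_Suc)
  ultimately show "inc_adj P L I (rev xs ! i) (rev xs ! Suc i)" using inc_adj_sym by metis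
qed auto

lemma inc_walk_isl_nth:
  "inc_walk P L I xs \<Longrightarrow> i < length xs \<Longrightarrow> isl (xs ! i) = (isl (hd xs) = even i)"
proof (induction i)
  case 0 then show ?case by (simp add: hd_conv_nth inc_walk_def)
next
  case (Suc i)
  then have "inc_adj P L I (xs ! i) (xs ! Suc i)" unfolding inc_walk_def by blast
  then show ?case using Suc inc_adj_isl by fastforce
qed

lemma inc_cycle_append:
  assumes "inc_walk P L I xs" "inc_walk P L I ys"
    and "inc_adj P L I (last xs) (hd ys)" "inc_adj P L I (last ys) (hd xs)"
    and "distinct (xs @ ys)" "3 \<le> length (xs @ ys)"
  shows "inc_cycle P L I (xs @ ys)"
  using assms inc_walk_append[OF assms(1-3)] unfolding inc_cycle_def
  by (auto simp: inc_walk_def)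

section \<open>Distance in the incidence graph\<close>

lemma inc_dist_le_mono: "inc_dist_le P L I x y d \<Longrightarrow> d \<le> d' \<Longrightarrow> inc_dist_le P L I x y d'"
  unfolding inc_dist_le_def by fastforce

lemma inc_dist_le_walk:
  "inc_walk P L I xs \<Longrightarrow> inc_dist_le P L I (hd xs) (last xs) (length xs - 1)"
  unfolding inc_dist_le_def inc_walk_def by (rule exI[of _ xs]) auto

lemma inc_dist_le_refl: "x \<in> inc_vertices P L \<Longrightarrow> inc_dist_le P L I x x 0"
  using inc_dist_le_walk[OF inc_walk_singleton, of x P L I] by simp

lemma inc_dist_le_adj: "inc_adj P L I x y \<Longrightarrow> inc_dist_le P L I x y 1"
  using inc_dist_le_walk[OF inc_walk_Cons[OF inc_walk_singleton], of y P L I x]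
    inc_adj_in_vertices by fastforce

lemma inc_dist_le_0: "inc_dist_le P L I x y 0 \<Longrightarrow> x = y"
  unfolding inc_dist_le_def inc_walk_def by (metis Suc_length_conv le_Suc_eq le_zero_eq
    length_0_conv last_ConsL list.sel(1))

lemma inc_dist_le_trans:
  assumes "inc_dist_le P L I x y d1" "inc_dist_le P L I y z d2"
  shows "inc_dist_le P L I x z (d1 + d2)"
proof -
  obtain xs ys where xs: "inc_walk P L I xs" "hd xs = x" "last xs = y" "length xs \<le> Suc d1"
    and ys: "inc_walk P L I ys" "hd ys = y" "last ys = z" "length ys \<le> Suc d2"
    using assms unfolding inc_dist_le_def by blast
  obtain y' ys' where ys': "ys = y' # ys'" using ys(1) by (cases ys) (auto simp: inc_walk_def)
  have "xs \<noteq> []" using xs(1) by (simp add: inc_walk_def)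
  then have "hd (xs @ tl ys) = x" "last (xs @ tl ys) = z" "length (xs @ tl ys) \<le> Suc (d1 + d2)"
    using xs ys ys' by auto
  moreover have "inc_walk P L I (xs @ tl ys)" using inc_walk_concat[OF xs(1) ys(1)] xs(3) ys(2) by simp
  ultimately show ?thesis unfolding inc_dist_le_def by blast
qed

lemma inc_dist_le_walk_nth:
  assumes "inc_walk P L I xs" "i < length xs"
  shows "inc_dist_le P L I (hd xs) (xs ! i) i"
proof -
  have "hd (take (Suc i) xs) = hd xs" using assms(2) by (cases xs) auto
  moreover have "last (take (Suc i) xs) = xs ! i" using assms(2) by (simp add: take_Suc_conv_app_nth)
  ultimately show ?thesis using inc_dist_le_walk[OF inc_walk_take[OF assms(1), of "Suc i"]] assms(2)
    by simp
qed

text \<open>Only meaningful between connected vertices: otherwise the LEAST is taken over an empty set.\<close>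

definition idist :: "'p set \<Rightarrow> 'l set \<Rightarrow> ('p \<Rightarrow> 'l \<Rightarrow> bool) \<Rightarrow> ('p + 'l) \<Rightarrow> ('p + 'l) \<Rightarrow> nat" where
  "idist P L I x y = (LEAST n. inc_dist_le P L I x y n)"

lemma idist_le: "inc_dist_le P L I x y d \<Longrightarrow> idist P L I x y \<le> d"
  unfolding idist_def by (rule Least_le)

lemma inc_dist_le_idist: "inc_dist_le P L I x y d \<Longrightarrow> inc_dist_le P L I x y (idist P L I x y)"
  unfolding idist_def by (rule LeastI)

lemma idist_le_iff:
  "inc_dist_le P L I x y d \<Longrightarrow> inc_dist_le P L I x y e \<longleftrightarrow> idist P L I x y \<le> e"
  using idist_le inc_dist_le_idist inc_dist_le_mono by metis

lemma obtain_shortest_walk: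
  assumes "inc_dist_le P L I x y d"
  obtains xs where "inc_walk P L I xs" "hd xs = x" "last xs = y"
    "length xs = Suc (idist P L I x y)"
proof -
  obtain xs where xs: "inc_walk P L I xs" "hd xs = x" "last xs = y"
    "length xs \<le> Suc (idist P L I x y)"
    using inc_dist_le_idist[OF assms] unfolding inc_dist_le_def by blast
  have "idist P L I x y \<le> length xs - 1" using idist_le[OF inc_dist_le_walk[OF xs(1)]] xs by simp
  moreover have "0 < length xs" using xs(1) by (simp add: inc_walk_def)
  ultimately have "length xs = Suc (idist P L I x y)" using xs(4) by linarith
  then show ?thesis using that xs by blast
qed

lemma idist_shortest_walk_nth:
  assumes xs: "inc_walk P L I xs" "hd xs = x" "last xs = y"
    "length xs = Suc (idist P L I x y)" and i: "i < length xs"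
  shows "idist P L I x (xs ! i) = i"
proof -
  have prefix: "inc_dist_le P L I x (xs ! i) i"
    using inc_dist_le_walk_nth[OF xs(1) i] xs(2) by simp
  have suffix: "inc_dist_le P L I (xs ! i) y (idist P L I x y - i)"
    using inc_dist_le_walk[OF inc_walk_drop[OF xs(1) i]] xs(3,4) i
    by (simp add: hd_drop_conv_nth)
  have "inc_dist_le P L I x y (idist P L I x (xs ! i) + (idist P L I x y - i))"
    using inc_dist_le_trans[OF inc_dist_le_idist[OF prefix] suffix] .
  then have "idist P L I x y \<le> idist P L I x (xs ! i) + (idist P L I x y - i)"
    by (rule idist_le)
  then show ?thesis using idist_le[OF prefix] i xs(4) by linarith
qed

lemma distinct_shortest_walk:
  assumes "inc_walk P L I xs" "hd xs = x" "last xs = y" "length xs = Suc (idist P L I x y)"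
  shows "distinct xs"
  unfolding distinct_conv_nth using idist_shortest_walk_nth[OF assms] by metis

lemma isl_idist:
  assumes "inc_dist_le P L I x y d"
  shows "isl y = (isl x = even (idist P L I x y))"
proof -
  obtain xs where xs: "inc_walk P L I xs" "hd xs = x" "last xs = y"
    "length xs = Suc (idist P L I x y)"
    using obtain_shortest_walk[OF assms] by blast
  then have "xs ! idist P L I x y = y" by (metis diff_Suc_1 last_conv_nth list.size(3) nat.distinct(1))
  then show ?thesis using inc_walk_isl_nth[OF xs(1), of "idist P L I x y"] xs by simp
qed

lemma idist_adj:
  assumes "inc_dist_le P L I x u d" "inc_adj P L I u v"
  shows "idist P L I x v = Suc (idist P L I x u) \<or> idist P L I x u = Suc (idist P L I x v)"
proof -
  have v: "inc_dist_le P L I x v (Suc (idist P L I x u))"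
    using inc_dist_le_trans[OF inc_dist_le_idist[OF assms(1)] inc_dist_le_adj[OF assms(2)]] by simp
  have "inc_adj P L I v u" using assms(2) inc_adj_sym by metis
  then have "inc_dist_le P L I x u (Suc (idist P L I x v))"
    using inc_dist_le_trans[OF inc_dist_le_idist[OF v] inc_dist_le_adj] by simp
  then have "idist P L I x u \<le> Suc (idist P L I x v)" by (rule idist_le)
  moreover have "idist P L I x v \<le> Suc (idist P L I x u)" using idist_le[OF v] .
  moreover have "even (idist P L I x u) \<noteq> even (idist P L I x v)"
    using isl_idist[OF assms(1)] isl_idist[OF v] inc_adj_isl[OF assms(2)] by auto
  ultimately show ?thesis by (auto simp: le_Suc_eq dest: le_antisym)
qed

lemma idist_eq_0_iff:
  assumes "inc_dist_le P L I x y d"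
  shows "idist P L I x y = 0 \<longleftrightarrow> x = y"
proof
  show "idist P L I x y = 0 \<Longrightarrow> x = y"
    using inc_dist_le_0 inc_dist_le_idist[OF assms] by metis
  have "x \<in> inc_vertices P L"
    using assms unfolding inc_dist_le_def inc_walk_def by (metis hd_in_set subsetD)
  then show "x = y \<Longrightarrow> idist P L I x y = 0"
    using idist_le[OF inc_dist_le_refl, of x P L I] by simp
qed

lemma obtain_idist_predecessor:
  assumes "inc_dist_le P L I x y d" "idist P L I x y = Suc j"
  obtains u where "inc_adj P L I u y" "inc_dist_le P L I x u j"
proof -
  obtain xs where xs: "inc_walk P L I xs" "hd xs = x" "last xs = y"
    "length xs = Suc (idist P L I x y)"
    using obtain_shortest_walk[OF assms(1)] by blast
  have "xs ! Suc j = y" using xs(3,4) assms(2) by (simp add: last_conv_nth flip: length_greater_0_conv)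
  then have "inc_adj P L I (xs ! j) y" using xs(1,4) assms(2) unfolding inc_walk_def by force
  moreover have "inc_dist_le P L I x (xs ! j) j"
    using inc_dist_le_walk_nth[OF xs(1), of j] xs(2,4) assms(2) by simp
  ultimately show ?thesis by (rule that)
qed

text \<open>Two different predecessors of y would close up two geodesics from x into a cycle of
  length at most 2 (j + 1) < 2 n.\<close>

lemma idist_predecessor_unique:
  assumes girth: "\<And>vs. inc_cycle P L I vs \<Longrightarrow> 2 * n \<le> length vs"
    and y: "idist P L I x y = Suc j" "Suc j < n"
    and za: "inc_adj P L I za y" "inc_dist_le P L I x za j"
    and zb: "inc_adj P L I zb y" "inc_dist_le P L I x zb j"
  shows "za = zb"
proof (rule ccontr)
  assume "za \<noteq> zb"
  let ?d = "idist P L I x"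
  have d_pred: "?d z = j" if "inc_adj P L I z y" "inc_dist_le P L I x z j" for z
  proof -
    have "inc_dist_le P L I x y (?d z + 1)"
      using inc_dist_le_trans[OF inc_dist_le_idist[OF that(2)] inc_dist_le_adj[OF that(1)]] .
    then show ?thesis using idist_le[OF that(2)] idist_le y(1) by fastforce
  qed
  obtain a where a: "inc_walk P L I a" "hd a = x" "last a = za" "length a = Suc (?d za)"
    using obtain_shortest_walk[OF za(2)] by blast
  obtain b where b: "inc_walk P L I b" "hd b = x" "last b = zb" "length b = Suc (?d zb)"
    using obtain_shortest_walk[OF zb(2)] by blast
  have la: "length a = Suc j" and lb: "length b = Suc j" using a(4) b(4) d_pred za zb by auto
  have da: "?d (a ! i) = i" if "i \<le> j" for i
    using idist_shortest_walk_nth[OF a] la that by simp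
  have db: "?d (b ! i) = i" if "i \<le> j" for i
    using idist_shortest_walk_nth[OF b] lb that by simp
  have "a ! j = za" "b ! j = zb" "a ! 0 = x" "b ! 0 = x"
    using a b la lb by (simp_all add: last_conv_nth hd_conv_nth flip: length_greater_0_conv)
  define m where "m = Max {i. i \<le> j \<and> a ! i = b ! i}"
  have "m \<in> {i. i \<le> j \<and> a ! i = b ! i}"
    unfolding m_def using \<open>a ! 0 = x\<close> \<open>b ! 0 = x\<close> by (intro Max_in) auto
  then have m: "m < j" "a ! m = b ! m"
    using \<open>a ! j = za\<close> \<open>b ! j = zb\<close> \<open>za \<noteq> zb\<close> by (auto simp: le_less)
  have m_max: "i \<le> m" if "i \<le> j" "a ! i = b ! i" for i
    unfolding m_def using that by (intro Max_ge) auto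
  define xs where "xs = drop m a"
  define ys where "ys = y # rev (drop (Suc m) b)"
  have "2 * n \<le> length (xs @ ys)"
  proof (rule girth, rule inc_cycle_append)
    show "inc_walk P L I xs" unfolding xs_def using inc_walk_drop[OF a(1)] la m by simp
    have "inc_walk P L I (rev (drop (Suc m) b))"
      using inc_walk_rev[OF inc_walk_drop[OF b(1)]] lb m by simp
    moreover have "hd (rev (drop (Suc m) b)) = zb" using b(3) lb m by (simp add: hd_rev)
    moreover have "inc_adj P L I y zb" using zb(1) inc_adj_sym by metis
    ultimately show "inc_walk P L I ys" unfolding ys_def by (simp add: inc_walk_Cons)
    show "inc_adj P L I (last xs) (hd ys)" unfolding xs_def ys_def using a(3) za(1) la m by simp
    have "inc_adj P L I (b ! m) (b ! Suc m)" using b(1) lb m unfolding inc_walk_def by simp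
    then have "inc_adj P L I (b ! Suc m) (a ! m)" using m(2) inc_adj_sym by metis
    then show "inc_adj P L I (last ys) (hd xs)"
      unfolding xs_def ys_def using m la lb by (simp add: last_rev hd_drop_conv_nth)
    have drop_a: "\<exists>i. m \<le> i \<and> i \<le> j \<and> v = a ! i" if v: "v \<in> set xs" for v
    proof -
      obtain i where "i < Suc j - m" "v = a ! (m + i)"
        using v la unfolding xs_def in_set_conv_nth by auto
      then show ?thesis by (intro exI[of _ "m + i"]) auto
    qed
    have drop_b: "\<exists>i. m < i \<and> i \<le> j \<and> v = b ! i" if v: "v \<in> set (drop (Suc m) b)" for v
    proof -
      obtain i where "i < j - m" "v = b ! (Suc m + i)"
        using v lb unfolding in_set_conv_nth by auto
      then show ?thesis by (intro exI[of _ "Suc m + i"]) auto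
    qed
    have y_notin: "y \<notin> set xs \<union> set (drop (Suc m) b)"
    proof
      assume "y \<in> set xs \<union> set (drop (Suc m) b)"
      then obtain i where "i \<le> j" "y = a ! i \<or> y = b ! i" using drop_a drop_b by blast
      then show False using da db y(1) by auto
    qed
    have ab_disjoint: "v \<notin> set (drop (Suc m) b)" if v: "v \<in> set xs" for v
    proof
      assume "v \<in> set (drop (Suc m) b)"
      then obtain i' where i': "m < i'" "i' \<le> j" "v = b ! i'" using drop_b by blast
      obtain i where i: "m \<le> i" "i \<le> j" "v = a ! i" using drop_a[OF v] by blast
      have "i = i'" using da[OF i(2)] db[OF i'(2)] i(3) i'(3) by simp
      then show False using m_max[OF i(2)] i i' by simp
    qed
    have "distinct xs" unfolding xs_def using distinct_shortest_walk[OF a] by simp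
    moreover have "distinct ys"
      unfolding ys_def using distinct_shortest_walk[OF b] y_notin by simp
    moreover have "set xs \<inter> set ys = {}" unfolding ys_def using y_notin ab_disjoint by auto
    ultimately show "distinct (xs @ ys)" by simp
    show "3 \<le> length (xs @ ys)" unfolding xs_def ys_def using la lb m by simp
  qed
  moreover have "length (xs @ ys) = 2 * (Suc j - m)" unfolding xs_def ys_def using la lb m by simp
  ultimately show False using y(2) by linarith
qed

section \<open>The number of lines of a generalised hexagon\<close>

locale gen_hexagon =
  fixes P :: "'p set" and L :: "'l set" and I :: "'p \<Rightarrow> 'l \<Rightarrow> bool" and s t :: nat
  assumes gen_hexagon: "gen_hexagon_of_order P L I s t"
begin

abbreviation "V \<equiv> inc_vertices P L"
abbreviation "adj \<equiv> inc_adj P L I"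
abbreviation "d \<equiv> idist P L I"

lemma finite_points: "finite P" and finite_lines: "finite L"
  using gen_hexagon by (simp_all add: gen_hexagon_of_order_def)

lemma finite_vertices: "finite V"
  using finite_points finite_lines by (simp add: inc_vertices_def)

lemma girth: "inc_cycle P L I vs \<Longrightarrow> 12 \<le> length vs"
  using gen_hexagon by (simp add: gen_hexagon_of_order_def gen_polygon_def)

lemma inc_dist_le_6: "x \<in> V \<Longrightarrow> y \<in> V \<Longrightarrow> inc_dist_le P L I x y 6"
  using gen_hexagon by (simp add: gen_hexagon_of_order_def gen_polygon_def)

lemma card_points_on_line: "l \<in> L \<Longrightarrow> card {p \<in> P. I p l} = s + 1"
  using gen_hexagon by (simp add: gen_hexagon_of_order_def)

lemma card_lines_through_point: "p \<in> P \<Longrightarrow> card {l \<in> L. I p l} = t + 1"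
  using gen_hexagon by (simp add: gen_hexagon_of_order_def)

lemma lines_nonempty: "L \<noteq> {}"
proof -
  obtain vs where "inc_cycle P L I vs"
    using gen_hexagon by (auto simp: gen_hexagon_of_order_def gen_polygon_def)
  then have "adj (vs ! 0) (vs ! 1)" unfolding inc_cycle_def inc_walk_def by auto
  then show ?thesis by (cases "vs ! 0"; cases "vs ! 1") auto
qed

lemma obtain_path:
  assumes "x \<in> V" "y \<in> V"
  obtains ws where "inc_walk P L I ws" "distinct ws" "hd ws = x" "last ws = y" "length ws \<le> 7"
proof -
  obtain ws where ws: "inc_walk P L I ws" "hd ws = x" "last ws = y" "length ws = Suc (d x y)"
    using obtain_shortest_walk[OF inc_dist_le_6[OF assms]] by blast
  moreover have "d x y \<le> 6" using idist_le[OF inc_dist_le_6[OF assms]] .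
  ultimately show ?thesis using that distinct_shortest_walk[OF ws] by simp
qed

lemma line_through_two_points_unique:
  assumes "p1 \<in> P" "p2 \<in> P" "p1 \<noteq> p2" "l1 \<in> L" "l2 \<in> L"
    and "I p1 l1" "I p2 l1" "I p1 l2" "I p2 l2"
  shows "l1 = l2"
proof (rule ccontr)
  assume "l1 \<noteq> l2"
  have "inc_walk P L I [Inr l1, Inl p1]" "inc_walk P L I [Inr l2, Inl p2]"
    using assms by (auto intro!: inc_walk_Cons inc_walk_singleton simp: inc_vertices_def)
  then have "inc_cycle P L I ([Inr l1, Inl p1] @ [Inr l2, Inl p2])"
    using assms \<open>l1 \<noteq> l2\<close> by (intro inc_cycle_append) auto
  then show False using girth by fastforce
qed

definition layer :: "'p + 'l \<Rightarrow> nat \<Rightarrow> ('p + 'l) set" where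
  "layer x j = {v \<in> V. d x v = j}"

lemma finite_layer: "finite (layer x j)"
  using finite_vertices by (simp add: layer_def)

lemma card_neighbours: "v \<in> V \<Longrightarrow> card {w \<in> V. adj v w} = (if isl v then t + 1 else s + 1)"
proof (cases v)
  case (Inl p)
  assume "v \<in> V"
  then have "p \<in> P" using Inl by (auto simp: inc_vertices_def)
  moreover have "{w \<in> V. adj v w} = Inr ` {l \<in> L. I p l}"
    using Inl \<open>p \<in> P\<close> by (auto simp: inc_vertices_def elim: inc_adj.elims)
  ultimately show ?thesis
    using Inl card_lines_through_point by (simp add: card_image)
next
  case (Inr l)
  assume "v \<in> V"
  then have "l \<in> L" using Inr by (auto simp: inc_vertices_def)
  moreover have "{w \<in> V. adj v w} = Inl ` {p \<in> P. I p l}"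
    using Inr \<open>l \<in> L\<close> by (auto simp: inc_vertices_def elim: inc_adj.elims)
  ultimately show ?thesis
    using Inr card_points_on_line by (simp add: card_image)
qed

context
  fixes x assumes x: "x \<in> V"
begin

lemma idist_le_6: "v \<in> V \<Longrightarrow> d x v \<le> 6"
  using idist_le inc_dist_le_6[OF x] by blast

lemma idist_neighbour: "v \<in> V \<Longrightarrow> adj v w \<Longrightarrow> d x w = Suc (d x v) \<or> d x v = Suc (d x w)"
  using idist_adj inc_dist_le_6[OF x] by blast

lemma layer_0: "layer x 0 = {x}"
  using idist_eq_0_iff[OF inc_dist_le_6[OF x]] x by (auto simp: layer_def)

lemma card_predecessors:
  assumes v: "v \<in> layer x (Suc j)" and j: "j \<le> 4"
  shows "card {u \<in> layer x j. adj u v} = 1"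
proof -
  have vV: "v \<in> V" and dv: "d x v = Suc j" using v by (auto simp: layer_def)
  obtain u where u: "adj u v" "inc_dist_le P L I x u j"
    using obtain_idist_predecessor[OF inc_dist_le_6[OF x vV] dv] by blast
  have layer_iff: "w \<in> layer x j \<longleftrightarrow> inc_dist_le P L I x w j" if "adj w v" for w
  proof -
    have "w \<in> V" using inc_adj_in_vertices[OF that] by blast
    then show ?thesis
      using idist_le_iff[OF inc_dist_le_6[OF x]] idist_neighbour[OF _ that] dv
      by (auto simp: layer_def)
  qed
  have "{u \<in> layer x j. adj u v} = {u}"
  proof (intro equalityI subsetI)
    fix w assume "w \<in> {u \<in> layer x j. adj u v}"
    then show "w \<in> {u}"
      using idist_predecessor_unique[of P L I 6 x v j w u] girth dv j u layer_iff by auto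
  qed (use u layer_iff in auto)
  then show ?thesis by simp
qed

lemma neighbours_in_adjacent_layers:
  assumes "v \<in> layer x (Suc j)"
  shows "{w \<in> V. adj v w} = {w \<in> layer x j. adj v w} \<union> {w \<in> layer x (Suc (Suc j)). adj v w}"
proof -
  have "v \<in> V" "d x v = Suc j" using assms by (auto simp: layer_def)
  then show ?thesis by (auto simp: layer_def dest: idist_neighbour)
qed

lemma card_successors:
  assumes v: "v \<in> layer x (Suc j)" and j: "j \<le> 4"
  shows "card {w \<in> layer x (Suc (Suc j)). adj v w} = card {w \<in> V. adj v w} - 1"
proof -
  have "{w \<in> layer x j. adj v w} = {u \<in> layer x j. adj u v}" using inc_adj_sym by metis
  then have "card {w \<in> layer x j. adj v w} = 1" using card_predecessors[OF v j] by simp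
  moreover have "card {w \<in> V. adj v w} =
      card {w \<in> layer x j. adj v w} + card {w \<in> layer x (Suc (Suc j)). adj v w}"
    unfolding neighbours_in_adjacent_layers[OF v] using finite_vertices
    by (intro card_Un_disjoint) (auto simp: layer_def)
  ultimately show ?thesis by simp
qed

lemma successors_of_root: "{w \<in> layer x 1. adj x w} = {w \<in> V. adj x w}"
proof -
  have "d x x = 0" using layer_0 by (auto simp: layer_def)
  then show ?thesis using x by (auto simp: layer_def dest: idist_neighbour[OF x])
qed

lemma card_layer_Suc:
  assumes "j \<le> 4"
  shows "card (layer x (Suc j)) = (\<Sum>u\<in>layer x j. card {w \<in> layer x (Suc j). adj u w})"
  using sum_multicount[OF finite_layer finite_layer, where R = adj and k = 1]
    card_predecessors assms by simp

lemma sum_card_successors_last_layer: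
  "(\<Sum>u\<in>layer x 5. card {w \<in> layer x 6. adj u w}) = (\<Sum>v\<in>layer x 6. card {w \<in> V. adj v w})"
proof (rule sum_multicount_gen[OF finite_layer finite_layer], intro ballI)
  fix v assume v: "v \<in> layer x 6"
  have "layer x 7 = {}" by (auto simp: layer_def dest: idist_le_6)
  then have "{w \<in> V. adj v w} = {w \<in> layer x 5. adj v w}"
    using neighbours_in_adjacent_layers[of v 5] v by (simp add: numeral_eq_Suc)
  also have "\<dots> = {u \<in> layer x 5. adj u v}" using inc_adj_sym by metis
  finally show "card {u \<in> layer x 5. adj u v} = card {w \<in> V. adj v w}" by simp
qed

end

context
  fixes l assumes l: "l \<in> L"
begin

lemma line_vertex: "Inr l \<in> V"
  using l by (simp add: inc_vertices_def)

lemma card_neighbours_in_layer: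
  "v \<in> layer (Inr l) j \<Longrightarrow> card {w \<in> V. adj v w} = (if odd j then t + 1 else s + 1)"
  using card_neighbours isl_idist[OF inc_dist_le_6[OF line_vertex]] by (auto simp: layer_def)

lemma card_layer_1: "card (layer (Inr l) 1) = s + 1"
  using card_layer_Suc[OF line_vertex, of 0] layer_0[OF line_vertex]
    successors_of_root[OF line_vertex] card_neighbours[OF line_vertex] by simp

lemma card_layer_Suc_from_line:
  assumes "1 \<le> j" "j \<le> 4"
  shows "card (layer (Inr l) (j + 1)) = card (layer (Inr l) j) * (if odd j then t else s)"
proof -
  obtain i where j: "j = Suc i" using assms(1) by (cases j) auto
  have "card {w \<in> layer (Inr l) (Suc j). adj u w} = (if odd j then t else s)"
    if "u \<in> layer (Inr l) j" for u
    using card_successors[OF line_vertex, of u i] card_neighbours_in_layer[OF that] that assms j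
    by simp
  then show ?thesis using card_layer_Suc[OF line_vertex assms(2)] by simp
qed

lemma card_layer_6_from_line: "(s + 1) * card (layer (Inr l) 6) = t * card (layer (Inr l) 5)"
proof -
  have "card {w \<in> layer (Inr l) 6. adj u w} = t" if "u \<in> layer (Inr l) 5" for u
    using card_successors[OF line_vertex, of u 4] card_neighbours_in_layer[OF that] that
    by simp
  then show ?thesis
    using sum_card_successors_last_layer[OF line_vertex] card_neighbours_in_layer
    by (simp add: mult.commute)
qed

lemma lines_eq_even_layers:
  "Inr ` L = layer (Inr l) 0 \<union> layer (Inr l) 2 \<union> layer (Inr l) 4 \<union> layer (Inr l) 6"
proof (rule set_eqI)
  fix v
  have "v \<in> Inr ` L \<longleftrightarrow> v \<in> V \<and> even (d (Inr l) v)"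
    using isl_idist[OF inc_dist_le_6[OF line_vertex], of v] by (cases v) (auto simp: inc_vertices_def)
  moreover have "v \<in> V \<Longrightarrow> even (d (Inr l) v) \<longleftrightarrow> d (Inr l) v \<in> {0, 2, 4, 6}"
    using idist_le_6[OF line_vertex, of v] by auto
  ultimately show "v \<in> Inr ` L \<longleftrightarrow> v \<in> layer (Inr l) 0 \<union> layer (Inr l) 2 \<union> layer (Inr l) 4 \<union> layer (Inr l) 6"
    by (auto simp: layer_def)
qed

end

theorem card_lines: "card L = (1 + t) * (1 + s * t + s ^ 2 * t ^ 2)"
proof -
  obtain l where l: "l \<in> L" using lines_nonempty by blast
  let ?c = "\<lambda>j. card (layer (Inr l) j)"
  have c2: "?c 2 = (s + 1) * t"
    using card_layer_1[OF l] card_layer_Suc_from_line[OF l, of 1] by (simp add: numeral_2_eq_2)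
  have c4: "?c 4 = (s + 1) * t * s * t"
    using c2 card_layer_Suc_from_line[OF l, of 2] card_layer_Suc_from_line[OF l, of 3] by simp
  have "(s + 1) * ?c 6 = (s + 1) * (s ^ 2 * t ^ 3)"
    using c4 card_layer_Suc_from_line[OF l, of 4] card_layer_6_from_line[OF l]
    by (simp add: power2_eq_square power3_eq_cube algebra_simps)
  then have c6: "?c 6 = s ^ 2 * t ^ 3" by (metis mult_left_cancel add_is_0 one_neq_zero)
  have "card L = ?c 0 + ?c 2 + ?c 4 + ?c 6"
  proof -
    have "card L = card (Inr ` L :: ('p + 'l) set)" by (simp add: card_image)
    also have "\<dots> = ?c 0 + ?c 2 + ?c 4 + ?c 6"
      unfolding lines_eq_even_layers[OF l] using finite_layer
      by (subst card_Un_disjoint; auto simp: layer_def)+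
    finally show ?thesis .
  qed
  then show ?thesis
    using layer_0[OF line_vertex[OF l]] c2 c4 c6
    by (simp add: power2_eq_square power3_eq_cube algebra_simps)
qed

end

section \<open>Lines meeting a subhexagon\<close>

locale subhexagon = G: gen_hexagon P L I s t + H: gen_hexagon P' L' I k t'
  for P :: "'p set" and L :: "'l set" and I s t and P' :: "'p set" and L' :: "'l set" and k t' +
  assumes sub_points: "P' \<subseteq> P" and sub_lines: "L' \<subseteq> L"
begin

lemma obtain_subhexagon_path:
  assumes "l1 \<in> L'" "l2 \<in> L'" "l1 \<noteq> l2"
  obtains ws where "inc_walk P L I ws" "distinct ws" "hd ws = Inr l1" "last ws = Inr l2"
    "2 \<le> length ws" "length ws \<le> 7" "set ws \<subseteq> inc_vertices P' L'"
proof -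
  obtain ws where ws: "inc_walk P' L' I ws" "distinct ws" "hd ws = Inr l1" "last ws = Inr l2"
    "length ws \<le> 7"
    using H.obtain_path[of "Inr l1" "Inr l2"] assms by (auto simp: inc_vertices_def)
  moreover have "2 \<le> length ws"
  proof -
    have "length ws \<noteq> 1"
    proof
      assume "length ws = 1"
      then obtain a where "ws = [a]" by (auto simp: length_Suc_conv)
      then show False using ws(3,4) assms(3) by simp
    qed
    moreover have "length ws \<noteq> 0" using ws(1) by (simp add: inc_walk_def)
    ultimately show ?thesis by linarith
  qed
  moreover have "inc_walk P L I ws" using inc_walk_mono[OF sub_points sub_lines ws(1)] .
  moreover have "set ws \<subseteq> inc_vertices P' L'" using ws(1) by (simp add: inc_walk_def)
  ultimately show ?thesis using that ws by blast
qed

lemma external_point_on_one_subline: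
  assumes p: "p \<in> P" "p \<notin> P'" and l: "l1 \<in> L'" "l2 \<in> L'" "I p l1" "I p l2"
  shows "l1 = l2"
proof (rule ccontr)
  assume "l1 \<noteq> l2"
  then obtain ws where ws: "inc_walk P L I ws" "distinct ws" "hd ws = Inr l1" "last ws = Inr l2"
    "2 \<le> length ws" "length ws \<le> 7" "set ws \<subseteq> inc_vertices P' L'"
    using obtain_subhexagon_path l by blast
  have "Inl p \<notin> set ws" using ws(7) p by (auto simp: inc_vertices_def)
  then have "inc_cycle P L I (ws @ [Inl p])"
    using ws p l sub_lines by (intro inc_cycle_append inc_walk_singleton) (auto simp: inc_vertices_def)
  then show False using G.girth ws(6) by fastforce
qed

lemma external_line_meets_one_subline:
  assumes m: "m \<in> L" "m \<notin> L'" and p: "p1 \<in> P" "p1 \<notin> P'" "p2 \<in> P" "p2 \<notin> P'"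
    and l: "l1 \<in> L'" "l2 \<in> L'" and inc: "I p1 m" "I p1 l1" "I p2 m" "I p2 l2"
  shows "l1 = l2"
proof (rule ccontr)
  assume "l1 \<noteq> l2"
  then have "p1 \<noteq> p2" using external_point_on_one_subline p l inc by blast
  obtain ws where ws: "inc_walk P L I ws" "distinct ws" "hd ws = Inr l1" "last ws = Inr l2"
    "2 \<le> length ws" "length ws \<le> 7" "set ws \<subseteq> inc_vertices P' L'"
    using obtain_subhexagon_path l \<open>l1 \<noteq> l2\<close> by blast
  have "Inl p1 \<notin> set ws" "Inl p2 \<notin> set ws" "Inr m \<notin> set ws"
    using ws(7) p m by (auto simp: inc_vertices_def)
  moreover have "inc_walk P L I [Inl p2, Inr m, Inl p1]"
    using p m inc by (intro inc_walk_Cons inc_walk_singleton) (auto simp: inc_vertices_def)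
  ultimately have "inc_cycle P L I (ws @ [Inl p2, Inr m, Inl p1])"
    using ws p l inc sub_lines \<open>p1 \<noteq> p2\<close> by (intro inc_cycle_append) auto
  then show False using G.girth ws(6) by fastforce
qed

definition external_points_on :: "'l \<Rightarrow> 'p set" where
  "external_points_on l' = {p \<in> P. I p l'} - P'"

definition external_lines :: "'l set" where
  "external_lines = (\<Union>l'\<in>L'. \<Union>p\<in>external_points_on l'. {m \<in> L. I p m} - {l'})"

lemma card_external_points_on: "l' \<in> L' \<Longrightarrow> card (external_points_on l') = s - k"
proof -
  assume l': "l' \<in> L'"
  have "card (external_points_on l') = card {p \<in> P. I p l'} - card ({p \<in> P. I p l'} \<inter> P')"
    unfolding external_points_on_def by (rule card_Diff_subset_Int) (use H.finite_points in simp)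
  also have "{p \<in> P. I p l'} \<inter> P' = {p \<in> P'. I p l'}" using sub_points by auto
  finally have "card (external_points_on l') = card {p \<in> P. I p l'} - card {p \<in> P'. I p l'}" .
  then show ?thesis using G.card_points_on_line H.card_points_on_line l' sub_lines by auto
qed

lemma external_lines_subset: "external_lines \<subseteq> L - L'"
  using external_point_on_one_subline unfolding external_lines_def external_points_on_def by blast

lemma card_external_lines_through_subline:
  assumes l': "l' \<in> L'"
  shows "card (\<Union>p\<in>external_points_on l'. {m \<in> L. I p m} - {l'}) = (s - k) * t"
proof -
  have "card (\<Union>p\<in>external_points_on l'. {m \<in> L. I p m} - {l'}) =
      (\<Sum>p\<in>external_points_on l'. card ({m \<in> L. I p m} - {l'}))"
  proof (rule card_UN_disjoint)
    show "finite (external_points_on l')" using G.finite_points by (simp add: external_points_on_def)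
    show "\<forall>p\<in>external_points_on l'. finite ({m \<in> L. I p m} - {l'})" using G.finite_lines by simp
    show "\<forall>p1\<in>external_points_on l'. \<forall>p2\<in>external_points_on l'. p1 \<noteq> p2 \<longrightarrow>
        ({m \<in> L. I p1 m} - {l'}) \<inter> ({m \<in> L. I p2 m} - {l'}) = {}"
    proof (intro ballI impI)
      fix p1 p2 assume p: "p1 \<in> external_points_on l'" "p2 \<in> external_points_on l'" "p1 \<noteq> p2"
      show "({m \<in> L. I p1 m} - {l'}) \<inter> ({m \<in> L. I p2 m} - {l'}) = {}"
        using G.line_through_two_points_unique[of p1 p2 _ l'] p l' sub_lines
        by (auto simp: external_points_on_def)
    qed
  qed
  also have "\<dots> = (\<Sum>p\<in>external_points_on l'. t)"
    using G.card_lines_through_point l' sub_lines by (intro sum.cong) (auto simp: external_points_on_def)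
  finally show ?thesis using card_external_points_on[OF l'] by simp
qed

lemma card_external_lines: "card external_lines = card L' * ((s - k) * t)"
proof -
  have "card external_lines = (\<Sum>l'\<in>L'. card (\<Union>p\<in>external_points_on l'. {m \<in> L. I p m} - {l'}))"
    unfolding external_lines_def
  proof (rule card_UN_disjoint)
    show "finite L'" by (rule H.finite_lines)
    show "\<forall>l'\<in>L'. finite (\<Union>p\<in>external_points_on l'. {m \<in> L. I p m} - {l'})"
      using G.finite_points G.finite_lines by (simp add: external_points_on_def)
    show "\<forall>l1\<in>L'. \<forall>l2\<in>L'. l1 \<noteq> l2 \<longrightarrow>
        (\<Union>p\<in>external_points_on l1. {m \<in> L. I p m} - {l1}) \<inter>
        (\<Union>p\<in>external_points_on l2. {m \<in> L. I p m} - {l2}) = {}"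
    proof (intro ballI impI)
      fix l1 l2 assume l: "l1 \<in> L'" "l2 \<in> L'" "l1 \<noteq> l2"
      show "(\<Union>p\<in>external_points_on l1. {m \<in> L. I p m} - {l1}) \<inter>
          (\<Union>p\<in>external_points_on l2. {m \<in> L. I p m} - {l2}) = {}"
      proof (intro equals0I)
        fix m assume m: "m \<in> (\<Union>p\<in>external_points_on l1. {m \<in> L. I p m} - {l1}) \<inter>
          (\<Union>p\<in>external_points_on l2. {m \<in> L. I p m} - {l2})"
        then obtain p1 where p1: "p1 \<in> external_points_on l1" "m \<in> L" "I p1 m" "m \<noteq> l1"
          by blast
        from m obtain p2 where p2: "p2 \<in> external_points_on l2" "I p2 m" by blast
        have "m \<notin> L'"
          using external_point_on_one_subline[of p1 l1 m] p1 l(1) by (auto simp: external_points_on_def)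
        then show False
          using external_line_meets_one_subline[of m p1 p2 l1 l2] p1 p2 l
          by (auto simp: external_points_on_def)
      qed
    qed
  qed
  then show ?thesis using card_external_lines_through_subline by simp
qed

lemma lines_eq_sublines_Un_external_lines:
  assumes "card L = card L' * (1 + (s - k) * t)"
  shows "L = L' \<union> external_lines"
proof -
  have disjoint: "L' \<inter> external_lines = {}" using external_lines_subset by blast
  have finite: "finite external_lines"
    using finite_subset[OF external_lines_subset] G.finite_lines by blast
  have subset: "L' \<union> external_lines \<subseteq> L" using sub_lines external_lines_subset by blast
  have "card (L' \<union> external_lines) = card L' + card external_lines"
    by (rule card_Un_disjoint[OF H.finite_lines finite disjoint])
  also have "\<dots> = card L" using card_external_lines assms by (simp add: algebra_simps)
  finally show ?thesis using card_subset_eq[OF G.finite_lines subset] by simp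
qed

lemma every_line_meets_subline:
  assumes "card L = card L' * (1 + (s - k) * t)" and l: "l \<in> L"
  shows "\<exists>l'\<in>L'. \<exists>p\<in>P. I p l \<and> I p l'"
proof -
  consider "l \<in> L'" | "l \<in> external_lines"
    using lines_eq_sublines_Un_external_lines[OF assms(1)] l by blast
  then show ?thesis
  proof cases
    case 1
    have "{p \<in> P. I p l} \<noteq> {}" using G.card_points_on_line[OF l] by force
    then show ?thesis using 1 by blast
  next
    case 2
    then show ?thesis by (auto simp: external_lines_def external_points_on_def)
  qed
qed
end

lemma line_count_identity:
  fixes s t k :: nat
  assumes "s = k ^ 2 * t"
  shows "1 + s * t + s ^ 2 * t ^ 2 = (1 + k * t + k ^ 2 * t ^ 2) * (1 + (s - k) * t)"
proof (cases "t = 0")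
  case False
  then have "k \<le> s" using assms by (simp add: power2_eq_square)
  then have diff: "int (s - k) = int s - int k" by simp
  have s: "int s = int k ^ 2 * int t" using assms by simp
  have "int (1 + s * t + s ^ 2 * t ^ 2) = int ((1 + k * t + k ^ 2 * t ^ 2) * (1 + (s - k) * t))"
    unfolding of_nat_add of_nat_mult of_nat_power of_nat_1 diff s by algebra
  then show ?thesis by (simp only: of_nat_eq_iff)
qed simp

theorem mainTheorem6:
  fixes P :: "'p set" and L :: "'l set" and I :: "'p \<Rightarrow> 'l \<Rightarrow> bool"
    and P' :: "'p set" and L' :: "'l set" and s t k :: nat
  assumes "gen_hexagon_of_order P L I s t"
    and "subhexagon_of_order P' L' P L I k t"
    and "k ^ 2 * t = s"
  shows "\<forall>l \<in> L. \<exists>l' \<in> L'. \<exists>p \<in> P. I p l \<and> I p l'"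
proof -
  interpret subhexagon P L I s t P' L' k t
    using assms(1,2) by unfold_locales (auto simp: subhexagon_of_order_def gen_hexagon_def)
  have "card L = (1 + t) * (1 + k * t + k ^ 2 * t ^ 2) * (1 + (s - k) * t)"
    using G.card_lines line_count_identity[OF assms(3)[symmetric]] by (simp only: mult.assoc)
  then have "card L = card L' * (1 + (s - k) * t)" using H.card_lines by simp
  then show ?thesis using every_line_meets_subline by blast
qed

end
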